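(* Let $\mu,\lambda>0$ and $L_2>0$. For $F\in\mathbb{R}^{3\times3}$ let $E=(F^TF-I)/2$ and $p(F)=\mu\|E\|_F^2+\frac\lambda2\mathrm{tr}^2(E)$. Define $$\bar p^{\mathrm{StVK}}(x,y)=\begin{cases}y\sqrt{6(2y/3-x)^2+y^2/3}& x>y\\ y\sqrt{6(2y/3+x)^2+y^2/3}& x<-y\\ x^2&\text{otherwise}\end{cases}$$ and $\bar p(F)=\mu\,\bar p^{\mathrm{StVK}}\big(\|E\|_F,\sqrt{L_2/\mu}\big)+\frac\lambda2\bar p^{\mathrm{StVK}}\big(\mathrm{tr}(E),\sqrt{2L_2/\lambda}\big)$. Then: (i) $\bar p$ is $q(L_2)$-curvature bounded for some polynomial $q$; (ii) $\bar p$ is twice differentiable; (iii) its second derivatives are locally Lipschitz; (iv) $p\ge0$ and $\bar p(F)=p(F)$ whenever $\bar p(F)\le L_2$.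
   Context: $\|\cdot\|_F$ is the Frobenius norm; $F$ is identified with a vector in $\mathbb{R}^9$. A function $\phi$ is $L$-curvature bounded if $\phi(x)+\frac L2\|x\|^2$ is convex and $\nabla\phi$ is $L$-Lipschitz. *)

theory Defs
  imports "HOL-Analysis.Analysis" "HOL-Computational_Algebra.Polynomial"
begin

type_synonym mat3 = "real^3^3"

text \<open>Green--Lagrange strain E = (F^T F - I)/2. The norm on real^3^3 is the
  Frobenius norm (F identified with a vector in R^9).\<close>
definition strainE :: "mat3 \<Rightarrow> mat3" where
  "strainE F = (1/2) *\<^sub>R (transpose F ** F - mat 1)"

definition stvk_energy :: "real \<Rightarrow> real \<Rightarrow> mat3 \<Rightarrow> real" where
  "stvk_energy mu lam F = mu * (norm (strainE F))^2 + lam/2 * (trace (strainE F))^2"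

definition pStVK :: "real \<Rightarrow> real \<Rightarrow> real" where
  "pStVK x y = (if x > y then y * sqrt (6 * (2*y/3 - x)^2 + y^2/3)
               else if x < - y then y * sqrt (6 * (2*y/3 + x)^2 + y^2/3)
               else x^2)"

definition pbar :: "real \<Rightarrow> real \<Rightarrow> real \<Rightarrow> mat3 \<Rightarrow> real" where
  "pbar mu lam L2 F = mu * pStVK (norm (strainE F)) (sqrt (L2/mu))
                    + lam/2 * pStVK (trace (strainE F)) (sqrt (2*L2/lam))"

definition has_gradient_everywhere :: "('a::real_inner \<Rightarrow> real) \<Rightarrow> ('a \<Rightarrow> 'a) \<Rightarrow> bool" where
  "has_gradient_everywhere f g \<longleftrightarrow> (\<forall>x. (f has_derivative (\<lambda>h. g x \<bullet> h)) (at x))"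

definition curvature_bounded :: "real \<Rightarrow> ('a::real_inner \<Rightarrow> real) \<Rightarrow> bool" where
  "curvature_bounded L f \<longleftrightarrow>
     convex_on UNIV (\<lambda>x. f x + L/2 * (norm x)^2) \<and>
     (\<exists>g. has_gradient_everywhere f g \<and> L-lipschitz_on UNIV g)"

definition twice_diff_loclip_hessian :: "('a::real_inner \<Rightarrow> real) \<Rightarrow> bool" where
  "twice_diff_loclip_hessian f \<longleftrightarrow>
     (\<exists>g (H :: 'a \<Rightarrow> 'a \<Rightarrow>\<^sub>L 'a).
        has_gradient_everywhere f g \<and>
        (\<forall>x. (g has_derivative blinfun_apply (H x)) (at x)) \<and>
        (\<forall>x. \<exists>U C. open U \<and> x \<in> U \<and> C-lipschitz_on U H))"

definition twice_differentiable :: "('a::real_inner \<Rightarrow> real) \<Rightarrow> bool" where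
  "twice_differentiable f \<longleftrightarrow>
     (\<exists>g (H :: 'a \<Rightarrow> 'a \<Rightarrow>\<^sub>L 'a).
        has_gradient_everywhere f g \<and>
        (\<forall>x. (g has_derivative blinfun_apply (H x)) (at x)))"

end

theory Submission
  imports Defs
begin

(* The one-dimensional profile pStVK(., y) is x^2 on [-y, y] and continues for |x| > y by the
   branch y * sqrt (6 (2y/3 - |x|)^2 + y^2/3), which agrees with x^2 to second order at +-y and grows
   only linearly.  Hence the profile is C^2, its first derivative is O(y), its second derivative is
   bounded, even after multiplication by x, and it is Lipschitz on bounded sets.  The trace term of
   pbar composes the profile with tr E = (|F|^2 - 3)/2; the norm term is rewritten as a profile of
   u = |E|^2, a polynomial in F, so no kink appears at E = 0.  Using |F|^2 = 2 tr E + 3 <= 4 |E| + 3,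
   the Hessian of pbar is bounded by mu (42 y + 33) + lam/2 (9 z + 6), where y = sqrt (L2/mu) and
   z = sqrt (2 L2/lam); by AM-GM this is at most linear in L2.  The bound is a Lipschitz constant of
   the gradient, which in turn makes pbar + L/2 |F|^2 convex.  Finally pbar <= L2 forces both
   arguments of the profile into its quadratic range, where pbar is the StVK energy. *)

section \<open>Gluing derivatives, and convexity from a Lipschitz gradient\<close>

lemma has_real_derivative_glue:
  fixes g h g' h' :: "real \<Rightarrow> real"
  assumes g: "\<And>x. x \<le> a \<Longrightarrow> (g has_real_derivative g' x) (at x)"
    and h: "\<And>x. a \<le> x \<Longrightarrow> (h has_real_derivative h' x) (at x)"
    and "g a = h a" and "g' a = h' a"
  shows "((\<lambda>x. if x \<le> a then g x else h x) has_real_derivative (if x \<le> a then g' x else h' x)) (at x)"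
proof -
  have "((\<lambda>x. if x \<in> {..a} then g x else h x) has_vector_derivative
          (if x \<in> {..a} then g' x else h' x)) (at x within UNIV)"
  proof (rule has_vector_derivative_If_within_closures[where T = "{a<..}"])
    show "x \<in> {..a} \<union> {a<..}" "UNIV = {..a} \<union> {a<..}" by auto
    show "(g has_vector_derivative g' x) (at x within {..a} \<union> (closure {..a} \<inter> closure {a<..}))"
      if "x \<in> {..a} \<union> (closure {..a} \<inter> closure {a<..})"
      using that g[of x] has_field_derivative_at_within
      by (auto simp: has_real_derivative_iff_has_vector_derivative[symmetric])
    show "(h has_vector_derivative h' x) (at x within {a<..} \<union> (closure {..a} \<inter> closure {a<..}))"
      if "x \<in> {a<..} \<union> (closure {..a} \<inter> closure {a<..})"
      using that h[of x] has_field_derivative_at_within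
      by (auto simp: has_real_derivative_iff_has_vector_derivative[symmetric])
  qed (use assms in auto)
  then show ?thesis
    by (simp add: has_real_derivative_iff_has_vector_derivative)
qed

lemma has_real_derivative_three_pieces:
  fixes f g h f' g' h' :: "real \<Rightarrow> real"
  assumes "a \<le> b"
    and f: "\<And>x. x \<le> a \<Longrightarrow> (f has_real_derivative f' x) (at x)"
    and g: "\<And>x. (g has_real_derivative g' x) (at x)"
    and h: "\<And>x. b \<le> x \<Longrightarrow> (h has_real_derivative h' x) (at x)"
    and "f a = g a" "f' a = g' a" "g b = h b" "g' b = h' b"
  shows "((\<lambda>x. if b < x then h x else if x < a then f x else g x) has_real_derivative
           (if b < x then h' x else if x < a then f' x else g' x)) (at x)"
proof -
  have inner: "((\<lambda>x. if x \<le> a then f x else g x) has_real_derivative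
                 (if x \<le> a then f' x else g' x)) (at x)" for x
    by (rule has_real_derivative_glue) (use assms in auto)
  have "((\<lambda>x. if x \<le> b then (if x \<le> a then f x else g x) else h x) has_real_derivative
          (if x \<le> b then (if x \<le> a then f' x else g' x) else h' x)) (at x)"
    by (rule has_real_derivative_glue[OF inner h]) (use assms in auto)
  moreover have "(\<lambda>x. if x \<le> b then (if x \<le> a then f x else g x) else h x)
      = (\<lambda>x. if b < x then h x else if x < a then f x else g x)"
    using assms by (auto simp: fun_eq_iff)
  moreover have "(if x \<le> b then (if x \<le> a then f' x else g' x) else h' x)
      = (if b < x then h' x else if x < a then f' x else g' x)"
    using assms by auto
  ultimately show ?thesis by simp
qed

text \<open>Along every line the derivative of \<open>f x + L/2 |x|\<^sup>2\<close> is monotone: the quadratic term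
  absorbs the Lipschitz bound on \<open>g\<close>.\<close>

lemma lipschitz_gradient_imp_convex_on:
  fixes f :: "'a::real_inner \<Rightarrow> real"
  assumes df: "\<And>x. (f has_derivative (\<lambda>h. g x \<bullet> h)) (at x)"
    and lip: "L-lipschitz_on UNIV g"
  shows "convex_on UNIV (\<lambda>x. f x + L / 2 * (norm x)^2)"
proof (rule convex_onI)
  fix t :: real and x y :: 'a assume t: "0 < t" "t < 1"
  define d where "d = y - x"
  define p where "p s = x + s *\<^sub>R d" for s
  define k where "k s = f (p s) + L / 2 * (norm (p s))^2" for s
  define k' where "k' s = (g (p s) + L *\<^sub>R p s) \<bullet> d" for s
  have dp: "(p has_derivative (\<lambda>h. h *\<^sub>R d)) (at s)" for s
    unfolding p_def[abs_def] by (auto intro!: derivative_eq_intros)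
  have dk: "(k has_real_derivative k' s) (at s)" for s
  proof -
    have "(k has_derivative (\<lambda>h. g (p s) \<bullet> (h *\<^sub>R d) + L / 2 * (p s \<bullet> (h *\<^sub>R d) + (h *\<^sub>R d) \<bullet> p s))) (at s)"
      unfolding k_def[abs_def] power2_norm_eq_inner
      by (intro has_derivative_add has_derivative_mult_right has_derivative_inner dp
          has_derivative_compose[OF dp df, unfolded o_def])
    moreover have "(\<lambda>h. g (p s) \<bullet> (h *\<^sub>R d) + L / 2 * (p s \<bullet> (h *\<^sub>R d) + (h *\<^sub>R d) \<bullet> p s)) = (*) (k' s)"
      by (simp add: fun_eq_iff k'_def inner_add_left inner_commute algebra_simps)
    ultimately show ?thesis by (simp add: has_field_derivative_def)
  qed
  have "k' s1 \<le> k' s2" if "s1 \<le> s2" for s1 s2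
  proof -
    have pd: "p s2 - p s1 = (s2 - s1) *\<^sub>R d" by (simp add: p_def algebra_simps)
    have "\<bar>(g (p s2) - g (p s1)) \<bullet> d\<bar> \<le> norm (g (p s2) - g (p s1)) * norm d"
      by (rule Cauchy_Schwarz_ineq2)
    also have "\<dots> \<le> L * norm (p s2 - p s1) * norm d"
      using lipschitz_onD[OF lip, of "p s2" "p s1"] by (intro mult_right_mono) (auto simp: dist_norm)
    also have "\<dots> = L * (s2 - s1) * (d \<bullet> d)"
      unfolding pd using that by (simp add: power2_norm_eq_inner[symmetric] power2_eq_square)
    finally have "\<bar>(g (p s2) - g (p s1)) \<bullet> d\<bar> \<le> L * (s2 - s1) * (d \<bullet> d)" .
    moreover have "k' s2 - k' s1 = (g (p s2) - g (p s1)) \<bullet> d + L * (s2 - s1) * (d \<bullet> d)"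
      unfolding k'_def by (simp add: p_def inner_diff_left inner_add_left algebra_simps)
    ultimately show ?thesis by linarith
  qed
  then have "convex_on UNIV k" by (intro convex_on_realI[OF _ dk]) auto
  then have "k ((1 - t) * 0 + t * 1) \<le> (1 - t) * k 0 + t * k 1"
    using convex_onD[of UNIV k t 0 1] t by simp
  moreover have "p t = (1 - t) *\<^sub>R x + t *\<^sub>R y" "p 0 = x" "p 1 = y"
    by (simp_all add: p_def d_def algebra_simps)
  ultimately show "f ((1 - t) *\<^sub>R x + t *\<^sub>R y) + L / 2 * (norm ((1 - t) *\<^sub>R x + t *\<^sub>R y))^2
      \<le> (1 - t) * (f x + L / 2 * (norm x)^2) + t * (f y + L / 2 * (norm y)^2)"
    by (simp add: k_def)
qed simp

section \<open>Lipschitz continuity on bounded sets\<close>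

definition is_lipschitz_on :: "'a::metric_space set \<Rightarrow> ('a \<Rightarrow> 'b::metric_space) \<Rightarrow> bool" where
  "is_lipschitz_on S f \<longleftrightarrow> (\<exists>C. C-lipschitz_on S f)"

lemma is_lipschitz_onI: "C-lipschitz_on S f \<Longrightarrow> is_lipschitz_on S f"
  unfolding is_lipschitz_on_def by blast

lemma is_lipschitz_onE:
  assumes "is_lipschitz_on S f" obtains C where "C-lipschitz_on S f"
  using assms unfolding is_lipschitz_on_def by blast

lemma is_lipschitz_on_const: "is_lipschitz_on S (\<lambda>x. c)"
  by (rule is_lipschitz_onI[OF lipschitz_on_constant])

lemma is_lipschitz_on_id: "is_lipschitz_on S (\<lambda>x. x)"
  by (rule is_lipschitz_onI[OF lipschitz_on_id])

lemma is_lipschitz_on_compose: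
  assumes "is_lipschitz_on S f" "is_lipschitz_on T g" "f ` S \<subseteq> T"
  shows "is_lipschitz_on S (\<lambda>x. g (f x))"
proof -
  obtain C D where f: "C-lipschitz_on S f" and g: "D-lipschitz_on T g"
    using assms(1,2) unfolding is_lipschitz_on_def by blast
  have "(D * C)-lipschitz_on S (\<lambda>x. g (f x))"
    by (rule lipschitz_on_compose2[OF f lipschitz_on_subset[OF g assms(3)]])
  then show ?thesis by (rule is_lipschitz_onI)
qed

lemma is_lipschitz_on_add:
  fixes f g :: "'a::metric_space \<Rightarrow> 'b::real_normed_vector"
  assumes "is_lipschitz_on S f" "is_lipschitz_on S g"
  shows "is_lipschitz_on S (\<lambda>x. f x + g x)"
  using assms lipschitz_on_add unfolding is_lipschitz_on_def by blast

lemma is_lipschitz_on_diff: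
  fixes f g :: "'a::metric_space \<Rightarrow> 'b::real_normed_vector"
  assumes "is_lipschitz_on S f" "is_lipschitz_on S g"
  shows "is_lipschitz_on S (\<lambda>x. f x - g x)"
  using assms lipschitz_on_diff unfolding is_lipschitz_on_def by blast

lemma is_lipschitz_on_linear:
  assumes "bounded_linear L" "is_lipschitz_on S f"
  shows "is_lipschitz_on S (\<lambda>x. L (f x))"
proof -
  obtain B where "B-lipschitz_on UNIV L"
    using bounded_linear.lipschitz_boundE[OF assms(1)] by blast
  then show ?thesis
    by (intro is_lipschitz_on_compose[OF assms(2)] is_lipschitz_onI) auto
qed

lemma is_lipschitz_on_cmult:
  fixes f :: "'a::metric_space \<Rightarrow> real"
  shows "is_lipschitz_on S f \<Longrightarrow> is_lipschitz_on S (\<lambda>x. c * f x)"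
  by (rule is_lipschitz_on_linear[OF bounded_linear_mult_right])

lemma is_lipschitz_on_max:
  fixes f :: "'a::metric_space \<Rightarrow> real"
  assumes "is_lipschitz_on S f"
  shows "is_lipschitz_on S (\<lambda>x. max (f x) c)"
proof -
  have "1-lipschitz_on UNIV (\<lambda>u::real. max u c)"
    by (rule lipschitz_onI) (auto simp: dist_real_def max_def)
  then show ?thesis
    by (intro is_lipschitz_on_compose[OF assms] is_lipschitz_onI) auto
qed

lemma is_lipschitz_on_min:
  fixes f :: "'a::metric_space \<Rightarrow> real"
  assumes "is_lipschitz_on S f"
  shows "is_lipschitz_on S (\<lambda>x. min (f x) c)"
proof -
  have "1-lipschitz_on UNIV (\<lambda>u::real. min u c)"
    by (rule lipschitz_onI) (auto simp: dist_real_def min_def)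
  then show ?thesis
    by (intro is_lipschitz_on_compose[OF assms] is_lipschitz_onI) auto
qed

lemma is_lipschitz_on_bounded_image:
  assumes "is_lipschitz_on S f" "bounded S"
  shows "bounded (f ` S)"
proof (cases "S = {}")
  case False
  then obtain x0 where x0: "x0 \<in> S" by blast
  obtain C where C: "C-lipschitz_on S f" using assms(1) by (rule is_lipschitz_onE)
  obtain B where B: "\<And>x. x \<in> S \<Longrightarrow> dist x0 x \<le> B"
    using assms(2) unfolding bounded_any_center[of S x0] by blast
  have "dist (f x0) (f x) \<le> C * B" if "x \<in> S" for x
    using lipschitz_onD[OF C x0 that] B[OF that] lipschitz_on_nonneg[OF C]
    by (meson mult_left_mono order_trans)
  then show ?thesis unfolding bounded_def by blast
qed simp

lemma is_lipschitz_on_compose_bounded: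
  assumes "bounded S" "is_lipschitz_on S f" "\<And>T. bounded T \<Longrightarrow> is_lipschitz_on T g"
  shows "is_lipschitz_on S (\<lambda>x. g (f x))"
  by (rule is_lipschitz_on_compose[OF assms(2) assms(3)[OF is_lipschitz_on_bounded_image[OF assms(2,1)]]])
    simp

lemma is_lipschitz_on_bilinear:
  fixes f :: "'a::metric_space \<Rightarrow> 'b::real_normed_vector" and g :: "'a \<Rightarrow> 'c::real_normed_vector"
  assumes pr: "bounded_bilinear pr" and S: "bounded S"
    and f: "is_lipschitz_on S f" and g: "is_lipschitz_on S g"
  shows "is_lipschitz_on S (\<lambda>x. pr (f x) (g x))"
proof -
  obtain Bf where Bf: "Bf > 0" "\<And>x. x \<in> S \<Longrightarrow> norm (f x) \<le> Bf"
    using is_lipschitz_on_bounded_image[OF f S] unfolding bounded_pos by auto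
  obtain Bg where Bg: "Bg > 0" "\<And>x. x \<in> S \<Longrightarrow> norm (g x) \<le> Bg"
    using is_lipschitz_on_bounded_image[OF g S] unfolding bounded_pos by auto
  obtain Cf Cg where Cf: "Cf-lipschitz_on S f" and Cg: "Cg-lipschitz_on S g"
    using f g unfolding is_lipschitz_on_def by blast
  obtain K where K: "\<And>a b. norm (pr a b) \<le> norm a * norm b * K" "K > 0"
    using bounded_bilinear.pos_bounded[OF pr] by blast
  have "(K * (Bf * Cg + Cf * Bg))-lipschitz_on S (\<lambda>x. pr (f x) (g x))"
  proof (rule lipschitz_onI)
    fix x y assume x: "x \<in> S" and y: "y \<in> S"
    have e: "pr (f x) (g x) - pr (f y) (g y) = pr (f x) (g x - g y) + pr (f x - f y) (g y)"
      by (simp add: bounded_bilinear.diff_left[OF pr] bounded_bilinear.diff_right[OF pr])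
    have "dist (pr (f x) (g x)) (pr (f y) (g y)) = norm (pr (f x) (g x - g y) + pr (f x - f y) (g y))"
      unfolding dist_norm e ..
    also have "\<dots> \<le> norm (f x) * norm (g x - g y) * K + norm (f x - f y) * norm (g y) * K"
      using K(1) norm_triangle_le add_mono by blast
    also have "\<dots> \<le> Bf * (Cg * dist x y) * K + (Cf * dist x y) * Bg * K"
      using lipschitz_onD[OF Cg x y] lipschitz_onD[OF Cf x y] Bf Bg x y K(2)
        lipschitz_on_nonneg[OF Cf] zero_le_dist[of x y]
      by (intro add_mono mult_right_mono mult_mono) (auto simp: dist_norm)
    finally show "dist (pr (f x) (g x)) (pr (f y) (g y)) \<le> K * (Bf * Cg + Cf * Bg) * dist x y"
      by (simp add: algebra_simps)
  qed (use K(2) Bf(1) Bg(1) lipschitz_on_nonneg[OF Cf] lipschitz_on_nonneg[OF Cg] in simp)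
  then show ?thesis by (rule is_lipschitz_onI)
qed

lemmas is_lipschitz_on_mult = is_lipschitz_on_bilinear[OF bounded_bilinear_mult]
lemmas is_lipschitz_on_scaleR = is_lipschitz_on_bilinear[OF bounded_bilinear_scaleR]

lemma is_lipschitz_on_inverse:
  fixes f :: "'a::metric_space \<Rightarrow> real"
  assumes f: "is_lipschitz_on S f" and c: "c > 0" "\<And>x. x \<in> S \<Longrightarrow> c \<le> \<bar>f x\<bar>"
  shows "is_lipschitz_on S (\<lambda>x. inverse (f x))"
proof -
  obtain C where C: "C-lipschitz_on S f" using f by (rule is_lipschitz_onE)
  have "(C / c^2)-lipschitz_on S (\<lambda>x. inverse (f x))"
  proof (rule lipschitz_onI)
    fix x y assume x: "x \<in> S" and y: "y \<in> S"
    have fx: "c \<le> \<bar>f x\<bar>" and fy: "c \<le> \<bar>f y\<bar>" using c x y by auto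
    then have "f x \<noteq> 0" "f y \<noteq> 0" using c by auto
    then have "dist (inverse (f x)) (inverse (f y)) = \<bar>f y - f x\<bar> / (\<bar>f x\<bar> * \<bar>f y\<bar>)"
      by (simp add: dist_real_def inverse_eq_divide field_simps abs_divide abs_mult)
    also have "\<dots> \<le> (C * dist x y) / (c * c)"
      using lipschitz_onD[OF C y x] fx fy c
      by (intro frac_le mult_mono) (auto simp: dist_real_def dist_commute)
    finally show "dist (inverse (f x)) (inverse (f y)) \<le> C / c^2 * dist x y"
      by (simp add: power2_eq_square)
  qed (use lipschitz_on_nonneg[OF C] in simp)
  then show ?thesis by (rule is_lipschitz_onI)
qed

lemma is_lipschitz_on_divide:
  fixes f g :: "'a::metric_space \<Rightarrow> real"
  assumes "bounded S" "is_lipschitz_on S f" "is_lipschitz_on S g"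
    and "c > 0" "\<And>x. x \<in> S \<Longrightarrow> c \<le> \<bar>g x\<bar>"
  shows "is_lipschitz_on S (\<lambda>x. f x / g x)"
  unfolding divide_inverse using assms
  by (intro is_lipschitz_on_mult is_lipschitz_on_inverse[where c = c]) auto

lemma is_lipschitz_on_sqrt:
  fixes f :: "'a::metric_space \<Rightarrow> real"
  assumes f: "is_lipschitz_on S f" and c: "c > 0" "\<And>x. x \<in> S \<Longrightarrow> c \<le> f x"
  shows "is_lipschitz_on S (\<lambda>x. sqrt (f x))"
proof -
  have "(1 / (2 * sqrt c))-lipschitz_on {c..} sqrt"
  proof (rule lipschitz_onI)
    fix a b :: real assume "a \<in> {c..}" "b \<in> {c..}"
    then have sab: "sqrt c \<le> sqrt a" "sqrt c \<le> sqrt b" and "0 \<le> a" "0 \<le> b"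
      using c by auto
    have "a - b = (sqrt a - sqrt b) * (sqrt a + sqrt b)"
      using \<open>0 \<le> a\<close> \<open>0 \<le> b\<close> by (simp add: algebra_simps)
    then have "\<bar>a - b\<bar> = \<bar>sqrt a - sqrt b\<bar> * (sqrt a + sqrt b)"
      using sab c by (simp add: abs_mult)
    moreover have "2 * sqrt c \<le> sqrt a + sqrt b" using sab by linarith
    ultimately have "\<bar>sqrt a - sqrt b\<bar> * (2 * sqrt c) \<le> \<bar>a - b\<bar>"
      by (metis abs_ge_zero mult_left_mono)
    then show "dist (sqrt a) (sqrt b) \<le> 1 / (2 * sqrt c) * dist a b"
      using c by (simp add: dist_real_def field_simps)
  qed (use c in simp)
  then show ?thesis
    using c by (intro is_lipschitz_on_compose[OF f] is_lipschitz_onI) auto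
qed

section \<open>The one-dimensional profile\<close>

text \<open>Primes denote derivatives in the
  variable the profile is applied to: \<open>x\<close> for \<open>pStVK_tail y x\<close> and \<open>pStVK x y\<close>, \<open>u\<close> for
  \<open>pStVK_sq y u\<close>.\<close>

definition pStVK_radicand :: "real \<Rightarrow> real \<Rightarrow> real" where
  "pStVK_radicand y x = 6 * (2 * y / 3 - x)^2 + y^2 / 3"

definition pStVK_tail :: "real \<Rightarrow> real \<Rightarrow> real" where
  "pStVK_tail y x = y * sqrt (pStVK_radicand y x)"

definition pStVK_tail' :: "real \<Rightarrow> real \<Rightarrow> real" where
  "pStVK_tail' y x = 6 * y * (x - 2 * y / 3) / sqrt (pStVK_radicand y x)"

definition pStVK_tail'' :: "real \<Rightarrow> real \<Rightarrow> real" where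
  "pStVK_tail'' y x = 2 * y^3 / (pStVK_radicand y x * sqrt (pStVK_radicand y x))"

lemma pStVK_radicand_ge: "y^2 / 3 \<le> pStVK_radicand y x"
  by (simp add: pStVK_radicand_def)

lemma pStVK_radicand_pos: "y > 0 \<Longrightarrow> pStVK_radicand y x > 0"
  by (rule less_le_trans[OF _ pStVK_radicand_ge]) simp

lemma pStVK_tail_at:
  assumes "y > 0"
  shows "pStVK_tail y y = y^2" "pStVK_tail' y y = 2 * y" "pStVK_tail'' y y = 2"
proof -
  have "pStVK_radicand y y = y^2" by (simp add: pStVK_radicand_def power2_eq_square field_simps)
  then show "pStVK_tail y y = y^2" "pStVK_tail' y y = 2 * y" "pStVK_tail'' y y = 2"
    using assms by (simp_all add: pStVK_tail_def pStVK_tail'_def pStVK_tail''_def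
        field_simps power2_eq_square power3_eq_cube)
qed

lemma has_real_derivative_pStVK_radicand:
  "(pStVK_radicand y has_real_derivative 12 * (x - 2 * y / 3)) (at x)"
  unfolding pStVK_radicand_def[abs_def]
  by (auto intro!: derivative_eq_intros simp: algebra_simps)

lemma has_real_derivative_pStVK_tail:
  assumes "y > 0"
  shows "(pStVK_tail y has_real_derivative pStVK_tail' y x) (at x)"
proof -
  have r: "pStVK_radicand y x > 0" by (rule pStVK_radicand_pos[OF assms])
  have "((\<lambda>x. y * sqrt (pStVK_radicand y x)) has_real_derivative
      y * (inverse (sqrt (pStVK_radicand y x)) / 2 * (12 * (x - 2 * y / 3)))) (at x)"
    by (intro DERIV_cmult DERIV_chain2[where f = sqrt] DERIV_real_sqrt
        has_real_derivative_pStVK_radicand r)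
  then show ?thesis
    unfolding pStVK_tail_def[abs_def] pStVK_tail'_def by (rule DERIV_cong) (use r in \<open>simp add: field_simps\<close>)
qed

lemma has_real_derivative_pStVK_tail':
  assumes "y > 0"
  shows "(pStVK_tail' y has_real_derivative pStVK_tail'' y x) (at x)"
proof -
  define a where "a = sqrt (pStVK_radicand y x)"
  have r: "pStVK_radicand y x > 0" by (rule pStVK_radicand_pos[OF assms])
  then have a: "a > 0" "a^2 = pStVK_radicand y x" by (simp_all add: a_def)
  have d: "((\<lambda>x. 6 * y * (x - 2 * y / 3) / sqrt (pStVK_radicand y x)) has_real_derivative
      (6 * y * 1 * a - 6 * y * (x - 2 * y / 3) * (inverse a / 2 * (12 * (x - 2 * y / 3)))) / (a * a))
      (at x)"
    unfolding a_def using r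
    by (intro DERIV_divide DERIV_cmult DERIV_chain2[where f = sqrt] DERIV_real_sqrt
        has_real_derivative_pStVK_radicand derivative_eq_intros) auto
  have "(6 * y * 1 * a - 6 * y * (x - 2 * y / 3) * (inverse a / 2 * (12 * (x - 2 * y / 3)))) / (a * a)
      = 6 * y * (a^2 - 6 * (x - 2 * y / 3)^2) / (a^2 * a)"
    using a(1) by (simp add: field_simps power2_eq_square power3_eq_cube)
  also have "\<dots> = pStVK_tail'' y x"
    unfolding pStVK_tail''_def a_def[symmetric] a(2)[symmetric]
    using a by (simp add: pStVK_radicand_def field_simps power2_eq_square power3_eq_cube)
  finally show ?thesis
    using d unfolding pStVK_tail'_def[abs_def] by simp
qed

lemma abs_pStVK_tail'_le:
  assumes "y > 0"
  shows "\<bar>pStVK_tail' y x\<bar> \<le> 3 * y"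
proof -
  define a where "a = sqrt (pStVK_radicand y x)"
  have a: "a > 0" using pStVK_radicand_pos[OF assms] by (simp add: a_def)
  have "(2 * (x - 2 * y / 3))^2 = 4 * (2 * y / 3 - x)^2"
    by (simp add: power2_eq_square algebra_simps)
  then have "(2 * (x - 2 * y / 3))^2 \<le> pStVK_radicand y x"
    unfolding pStVK_radicand_def using zero_le_power2[of "2 * y / 3 - x"] zero_le_power2[of y]
    by linarith
  then have "\<bar>2 * (x - 2 * y / 3)\<bar> \<le> a"
    unfolding a_def using real_sqrt_le_mono by fastforce
  then have "2 * \<bar>x - 2 * y / 3\<bar> \<le> a" by arith
  then have "6 * y * \<bar>x - 2 * y / 3\<bar> \<le> 3 * y * a"
    using assms by simp
  then show ?thesis
    using assms a by (simp add: pStVK_tail'_def a_def[symmetric] abs_mult abs_divide divide_le_eq)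
qed

lemma pStVK_tail''_nonneg: "y > 0 \<Longrightarrow> 0 \<le> pStVK_tail'' y x"
  using pStVK_radicand_pos[of y x] by (simp add: pStVK_tail''_def)

lemma pStVK_tail''_bounds:
  assumes y: "y > 0" and x: "y \<le> x"
  shows "pStVK_tail'' y x \<le> 2" "x * pStVK_tail'' y x \<le> 3 * y"
proof -
  define g where "g = pStVK_radicand y x"
  define a where "a = sqrt g"
  have g: "g > 0" using pStVK_radicand_pos[OF y] by (simp add: g_def)
  have a: "a > 0" "a^2 = g" using g by (simp_all add: a_def)
  define q where "q = (2 * y / 3 - x)^2"
  have "(y / 3)^2 \<le> q" "(x / 3)^2 \<le> q"
    unfolding q_def abs_le_square_iff[symmetric] using x y by auto
  then have "y^2 \<le> 9 * q" "x^2 \<le> 9 * q" by (simp_all add: power_divide)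
  moreover have "g = 6 * q + y^2 / 3" by (simp add: g_def q_def pStVK_radicand_def)
  ultimately have gy: "y^2 \<le> g" and gx: "2 * x^2 \<le> 3 * g"
    using zero_le_power2[of y] by linarith+
  have ay: "y \<le> a" using gy by (simp add: a_def real_le_rsqrt)
  have "(2 * x / 3)^2 \<le> g" using gx g by (simp add: power_divide power_mult_distrib)
  then have ax: "2 * x \<le> 3 * a" using real_le_rsqrt by (fastforce simp: a_def)
  have t: "pStVK_tail'' y x = 2 * y^3 / (g * a)" by (simp add: pStVK_tail''_def g_def a_def)
  have "2 * y^3 \<le> 2 * (g * a)"
    using gy ay y g by (simp add: power3_eq_cube power2_eq_square) (rule mult_mono, auto)
  then show "pStVK_tail'' y x \<le> 2"
    unfolding t using g a by (simp add: divide_le_eq)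
  have "x * (2 * y^3) \<le> 3 * a * y * y^2"
    using mult_right_mono[OF ax, of "y^3"] y by (simp add: power3_eq_cube power2_eq_square algebra_simps)
  also have "\<dots> \<le> 3 * y * (g * a)" using gy a y by (simp add: mult_left_mono algebra_simps)
  finally show "x * pStVK_tail'' y x \<le> 3 * y"
    unfolding t using g a by (simp add: divide_le_eq)
qed

lemma is_lipschitz_on_pStVK_tail_derivs:
  fixes S :: "real set"
  assumes y: "y > 0" and S: "bounded S"
  shows "is_lipschitz_on S (pStVK_tail' y)" "is_lipschitz_on S (pStVK_tail'' y)"
proof -
  define c where "c = y^2 / 3"
  have c: "c > 0" "\<And>x. c \<le> pStVK_radicand y x" using y pStVK_radicand_ge by (auto simp: c_def)
  have sc: "sqrt c > 0" "\<And>x. sqrt c \<le> \<bar>sqrt (pStVK_radicand y x)\<bar>"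
    using c by (auto intro: order_trans[OF real_sqrt_le_mono abs_ge_self])
  have cc: "c * sqrt c \<le> \<bar>pStVK_radicand y x * sqrt (pStVK_radicand y x)\<bar>" for x
  proof -
    have "c \<le> \<bar>pStVK_radicand y x\<bar>" using c(2)[of x] by linarith
    then show ?thesis using sc(2)[of x] c(1) unfolding abs_mult by (intro mult_mono) auto
  qed
  have rad: "is_lipschitz_on S (pStVK_radicand y)"
    unfolding pStVK_radicand_def[abs_def] power2_eq_square using S
    by (intro is_lipschitz_on_add is_lipschitz_on_cmult is_lipschitz_on_mult is_lipschitz_on_diff
        is_lipschitz_on_const is_lipschitz_on_id)
  have sqrt_rad: "is_lipschitz_on S (\<lambda>x. sqrt (pStVK_radicand y x))"
    by (rule is_lipschitz_on_sqrt[OF rad c])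
  show "is_lipschitz_on S (pStVK_tail' y)"
    unfolding pStVK_tail'_def[abs_def]
    by (rule is_lipschitz_on_divide[OF S _ sqrt_rad sc])
      (intro is_lipschitz_on_cmult is_lipschitz_on_diff is_lipschitz_on_id is_lipschitz_on_const)
  show "is_lipschitz_on S (pStVK_tail'' y)"
    unfolding pStVK_tail''_def[abs_def] using c sc
    by (intro is_lipschitz_on_divide[OF S is_lipschitz_on_const is_lipschitz_on_mult[OF S rad sqrt_rad] _ cc])
      simp
qed

definition pStVK' :: "real \<Rightarrow> real \<Rightarrow> real" where
  "pStVK' x y = (if x > y then pStVK_tail' y x else if x < - y then - pStVK_tail' y (- x) else 2 * x)"

definition pStVK'' :: "real \<Rightarrow> real \<Rightarrow> real" where
  "pStVK'' x y = (if x > y then pStVK_tail'' y x else if x < - y then pStVK_tail'' y (- x) else 2)"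

lemma pStVK_eq_tail:
  "pStVK x y = (if x > y then pStVK_tail y x else if x < - y then pStVK_tail y (- x) else x^2)"
  by (simp add: pStVK_def pStVK_tail_def pStVK_radicand_def)

lemma has_real_derivative_reflect:
  assumes "(f has_real_derivative f') (at (- x))"
  shows "((\<lambda>x. f (- x)) has_real_derivative - f') (at x)"
  using DERIV_chain2[OF assms DERIV_minus[OF DERIV_ident]] by simp

lemma has_real_derivative_pStVK:
  assumes y: "y > 0"
  shows "((\<lambda>x. pStVK x y) has_real_derivative pStVK' x y) (at x)"
  unfolding pStVK_eq_tail pStVK'_def
proof (rule has_real_derivative_three_pieces[where f = "\<lambda>x. pStVK_tail y (- x)"
      and f' = "\<lambda>x. - pStVK_tail' y (- x)" and g = "\<lambda>x. x^2" and g' = "\<lambda>x. 2 * x"])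
  show "((\<lambda>x. pStVK_tail y (- x)) has_real_derivative - pStVK_tail' y (- x)) (at x)" for x
    by (intro has_real_derivative_reflect has_real_derivative_pStVK_tail y)
  show "((\<lambda>x. x^2) has_real_derivative 2 * x) (at x)" for x
    by (auto intro!: derivative_eq_intros)
qed (use y pStVK_tail_at[OF y] has_real_derivative_pStVK_tail[OF y] in auto)

lemma has_real_derivative_pStVK':
  assumes y: "y > 0"
  shows "((\<lambda>x. pStVK' x y) has_real_derivative pStVK'' x y) (at x)"
  unfolding pStVK'_def pStVK''_def
proof (rule has_real_derivative_three_pieces[where f = "\<lambda>x. - pStVK_tail' y (- x)"
      and f' = "\<lambda>x. pStVK_tail'' y (- x)" and g = "\<lambda>x. 2 * x" and g' = "\<lambda>x. 2"])
  show "((\<lambda>x. - pStVK_tail' y (- x)) has_real_derivative pStVK_tail'' y (- x)) (at x)" for x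
    using has_real_derivative_reflect[OF has_real_derivative_pStVK_tail'[OF y]] DERIV_minus by fastforce
  show "((\<lambda>x. 2 * x) has_real_derivative 2) (at x)" for x
    by (auto intro!: derivative_eq_intros)
qed (use y pStVK_tail_at[OF y] has_real_derivative_pStVK_tail'[OF y] in auto)

lemma pStVK_deriv_bounds:
  assumes y: "y > 0"
  shows "\<bar>pStVK' x y\<bar> \<le> 3 * y" "\<bar>pStVK'' x y\<bar> \<le> 2" "\<bar>x * pStVK'' x y\<bar> \<le> 3 * y"
proof -
  have tail: "\<bar>pStVK_tail' y s\<bar> \<le> 3 * y" "\<bar>pStVK_tail'' y s\<bar> \<le> 2" "\<bar>s * pStVK_tail'' y s\<bar> \<le> 3 * y"
    if "y < s" for s
    using abs_pStVK_tail'_le[OF y] pStVK_tail''_nonneg[OF y, of s] pStVK_tail''_bounds[OF y, of s] y that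
    by (auto simp: abs_mult)
  consider "y < x" | "x < - y" | "- y \<le> x" "x \<le> y" by linarith
  then have "\<bar>pStVK' x y\<bar> \<le> 3 * y \<and> \<bar>pStVK'' x y\<bar> \<le> 2 \<and> \<bar>x * pStVK'' x y\<bar> \<le> 3 * y"
  proof cases
    case 1
    then show ?thesis using tail[of x] by (simp add: pStVK'_def pStVK''_def)
  next
    case 2
    then show ?thesis using tail[of "- x"] y by (simp add: pStVK'_def pStVK''_def)
  next
    case 3
    then show ?thesis using y by (auto simp: pStVK'_def pStVK''_def)
  qed
  then show "\<bar>pStVK' x y\<bar> \<le> 3 * y" "\<bar>pStVK'' x y\<bar> \<le> 2" "\<bar>x * pStVK'' x y\<bar> \<le> 3 * y"
    by simp_all
qed

lemma is_lipschitz_on_pStVK_derivs: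
  fixes S :: "real set"
  assumes y: "y > 0" and S: "bounded S"
  shows "is_lipschitz_on S (\<lambda>x. pStVK' x y)" "is_lipschitz_on S (\<lambda>x. pStVK'' x y)"
proof -
  note tail = is_lipschitz_on_pStVK_tail_derivs[OF y]
  \<comment> \<open>Clamping the argument turns the piecewise definitions into sums of globally defined terms.\<close>
  have "pStVK' x y = pStVK_tail' y (max x y) - pStVK_tail' y (max (- x) y) + 2 * max (min x y) (- y)"
    and "pStVK'' x y = pStVK_tail'' y (max x y) + pStVK_tail'' y (max (- x) y) - 2" for x
    using pStVK_tail_at[OF y] y by (auto simp: pStVK'_def pStVK''_def max_def min_def)
  moreover have "is_lipschitz_on S (\<lambda>x. pStVK_tail' y (max x y) - pStVK_tail' y (max (- x) y)
      + 2 * max (min x y) (- y))"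
    by (intro is_lipschitz_on_add is_lipschitz_on_diff is_lipschitz_on_cmult
        is_lipschitz_on_compose_bounded[OF S _ tail(1)] is_lipschitz_on_max is_lipschitz_on_min
        is_lipschitz_on_linear[OF bounded_linear_minus[OF bounded_linear_ident]] is_lipschitz_on_id)
  moreover have "is_lipschitz_on S (\<lambda>x. pStVK_tail'' y (max x y) + pStVK_tail'' y (max (- x) y) - 2)"
    by (intro is_lipschitz_on_add is_lipschitz_on_diff is_lipschitz_on_const
        is_lipschitz_on_compose_bounded[OF S _ tail(2)] is_lipschitz_on_max
        is_lipschitz_on_linear[OF bounded_linear_minus[OF bounded_linear_ident]] is_lipschitz_on_id)
  ultimately show "is_lipschitz_on S (\<lambda>x. pStVK' x y)" "is_lipschitz_on S (\<lambda>x. pStVK'' x y)"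
    by simp_all
qed

text \<open>The profile as a function of \<open>u = x\<^sup>2\<close>: composed with \<open>|E|\<^sup>2\<close> it stays smooth where \<open>E = 0\<close>.\<close>

definition pStVK_sq :: "real \<Rightarrow> real \<Rightarrow> real" where
  "pStVK_sq y u = (if u \<le> y^2 then u else pStVK_tail y (sqrt u))"

definition pStVK_sq' :: "real \<Rightarrow> real \<Rightarrow> real" where
  "pStVK_sq' y u = (if u \<le> y^2 then 1 else pStVK_tail' y (sqrt u) / (2 * sqrt u))"

definition pStVK_sq'' :: "real \<Rightarrow> real \<Rightarrow> real" where
  "pStVK_sq'' y u = (if u \<le> y^2 then 0
     else (sqrt u * pStVK_tail'' y (sqrt u) - pStVK_tail' y (sqrt u)) / (4 * sqrt u ^ 3))"

lemma pStVK_eq_pStVK_sq: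
  assumes "y > 0" "0 \<le> x"
  shows "pStVK x y = pStVK_sq y (x^2)"
proof -
  have "y < x \<longleftrightarrow> \<not> x^2 \<le> y^2" using assms by (simp add: abs_le_square_iff[symmetric] not_le)
  then show ?thesis using assms by (simp add: pStVK_eq_tail pStVK_sq_def)
qed

lemma has_real_derivative_pStVK_sq:
  assumes y: "y > 0"
  shows "(pStVK_sq y has_real_derivative pStVK_sq' y u) (at u)"
  unfolding pStVK_sq_def[abs_def] pStVK_sq'_def
proof (rule has_real_derivative_glue)
  fix u assume "y^2 \<le> u"
  then have "0 < u" using zero_less_power[OF y, of 2] by linarith
  then have u: "sqrt u > 0" by simp
  have "((\<lambda>u. pStVK_tail y (sqrt u)) has_real_derivative
      pStVK_tail' y (sqrt u) * (inverse (sqrt u) / 2)) (at u)"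
    using u by (intro DERIV_chain2[OF has_real_derivative_pStVK_tail[OF y]] DERIV_real_sqrt) simp
  then show "((\<lambda>u. pStVK_tail y (sqrt u)) has_real_derivative
      pStVK_tail' y (sqrt u) / (2 * sqrt u)) (at u)"
    by (rule DERIV_cong) (use u in \<open>simp add: field_simps\<close>)
qed (use y pStVK_tail_at[OF y] DERIV_ident in simp_all)

lemma has_real_derivative_pStVK_sq':
  assumes y: "y > 0"
  shows "(pStVK_sq' y has_real_derivative pStVK_sq'' y u) (at u)"
  unfolding pStVK_sq'_def[abs_def] pStVK_sq''_def
proof (rule has_real_derivative_glue)
  fix u assume "y^2 \<le> u"
  then have "0 < u" using zero_less_power[OF y, of 2] by linarith
  then have u: "sqrt u > 0" by simp
  define r where "r = sqrt u"
  have ds: "(sqrt has_real_derivative inverse r / 2) (at u)"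
    using u by (simp add: r_def DERIV_real_sqrt)
  have "((\<lambda>u. pStVK_tail' y (sqrt u) / (2 * sqrt u)) has_real_derivative
      ((pStVK_tail'' y r * (inverse r / 2)) * (2 * r) - pStVK_tail' y r * (2 * (inverse r / 2)))
        / ((2 * r) * (2 * r))) (at u)"
    unfolding r_def using u
    by (intro DERIV_divide DERIV_chain2[OF has_real_derivative_pStVK_tail'[OF y]] DERIV_cmult
        ds[unfolded r_def]) auto
  moreover have "((pStVK_tail'' y r * (inverse r / 2)) * (2 * r) - pStVK_tail' y r * (2 * (inverse r / 2)))
        / ((2 * r) * (2 * r)) = (r * pStVK_tail'' y r - pStVK_tail' y r) / (4 * r ^ 3)"
    using u unfolding r_def[symmetric] by (simp add: field_simps power3_eq_cube)
  ultimately show "((\<lambda>u. pStVK_tail' y (sqrt u) / (2 * sqrt u)) has_real_derivative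
      (sqrt u * pStVK_tail'' y (sqrt u) - pStVK_tail' y (sqrt u)) / (4 * sqrt u ^ 3)) (at u)"
    by (simp add: r_def)
qed (use y pStVK_tail_at[OF y] DERIV_const in simp_all)

lemma pStVK_sq_deriv_bounds:
  assumes y: "y > 0" and u: "0 \<le> u"
  shows "\<bar>pStVK_sq' y u\<bar> \<le> 3 / 2" "sqrt u * \<bar>pStVK_sq' y u\<bar> \<le> 3 / 2 * y"
    and "u * \<bar>pStVK_sq'' y u\<bar> \<le> 3 / 2" "u * sqrt u * \<bar>pStVK_sq'' y u\<bar> \<le> 3 / 2 * y"
proof -
  have "(\<bar>pStVK_sq' y u\<bar> \<le> 3 / 2 \<and> sqrt u * \<bar>pStVK_sq' y u\<bar> \<le> 3 / 2 * y)
      \<and> (u * \<bar>pStVK_sq'' y u\<bar> \<le> 3 / 2 \<and> u * sqrt u * \<bar>pStVK_sq'' y u\<bar> \<le> 3 / 2 * y)"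
  proof (cases "u \<le> y^2")
    case True
    then have "sqrt u \<le> y" using y by (simp add: real_le_lsqrt)
    then show ?thesis using True y by (simp add: pStVK_sq'_def pStVK_sq''_def)
  next
    case False
    define r where "r = sqrt u"
    have r: "y < r" using False y by (simp add: r_def real_less_rsqrt)
    have u_r: "u = r^2" using u by (simp add: r_def)
    have t': "\<bar>pStVK_tail' y r\<bar> \<le> 3 * y" by (rule abs_pStVK_tail'_le[OF y])
    have "0 \<le> r * pStVK_tail'' y r" "r * pStVK_tail'' y r \<le> 3 * y"
      using r y pStVK_tail''_nonneg[OF y, of r] pStVK_tail''_bounds(2)[OF y, of r] by simp_all
    then have t'': "\<bar>r * pStVK_tail'' y r - pStVK_tail' y r\<bar> \<le> 6 * y" using t' by linarith
    have e': "r * \<bar>pStVK_sq' y u\<bar> = \<bar>pStVK_tail' y r\<bar> / 2"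
      and e'': "r^3 * \<bar>pStVK_sq'' y u\<bar> = \<bar>r * pStVK_tail'' y r - pStVK_tail' y r\<bar> / 4"
      using False r y unfolding pStVK_sq'_def pStVK_sq''_def r_def[symmetric]
      by (simp_all add: abs_divide abs_mult)
    have s': "r * \<bar>pStVK_sq' y u\<bar> \<le> 3 / 2 * y" and s'': "r^3 * \<bar>pStVK_sq'' y u\<bar> \<le> 3 / 2 * y"
      using e' e'' t' t'' by simp_all
    moreover have "3 / 2 * y \<le> 3 / 2 * r" using r by simp
    ultimately have "r * \<bar>pStVK_sq' y u\<bar> \<le> r * (3 / 2)" "r * (r^2 * \<bar>pStVK_sq'' y u\<bar>) \<le> r * (3 / 2)"
      by (simp_all add: power3_eq_cube power2_eq_square mult.assoc)
    then have "\<bar>pStVK_sq' y u\<bar> \<le> 3 / 2" "r^2 * \<bar>pStVK_sq'' y u\<bar> \<le> 3 / 2"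
      using r y by (simp_all add: mult_le_cancel_left_pos)
    moreover have "sqrt u = r" "0 < r" using r y by (simp add: r_def, linarith)
    ultimately show ?thesis
      using s' s'' unfolding u_r by (simp add: power3_eq_cube power2_eq_square mult_ac)
  qed
  then show "\<bar>pStVK_sq' y u\<bar> \<le> 3 / 2" "sqrt u * \<bar>pStVK_sq' y u\<bar> \<le> 3 / 2 * y"
    and "u * \<bar>pStVK_sq'' y u\<bar> \<le> 3 / 2" "u * sqrt u * \<bar>pStVK_sq'' y u\<bar> \<le> 3 / 2 * y"
    by simp_all
qed

lemma is_lipschitz_on_pStVK_sq_derivs:
  fixes S :: "real set"
  assumes y: "y > 0" and S: "bounded S"
  shows "is_lipschitz_on S (pStVK_sq' y)" "is_lipschitz_on S (pStVK_sq'' y)"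
proof -
  note tail = is_lipschitz_on_pStVK_tail_derivs[OF y]
  define r where "r u = sqrt (max u (y^2))" for u
  have ry: "y \<le> r u" for u using y by (simp add: r_def real_le_rsqrt)
  have "pStVK_sq' y u = pStVK_tail' y (r u) / (2 * r u)"
    and "pStVK_sq'' y u = (r u * pStVK_tail'' y (r u) - pStVK_tail' y (r u)) / (4 * (r u * r u * r u))" for u
    using y pStVK_tail_at[OF y] by (auto simp: pStVK_sq'_def pStVK_sq''_def r_def max_def power3_eq_cube)
  then have eq: "pStVK_sq' y = (\<lambda>u. pStVK_tail' y (r u) / (2 * r u))"
    "pStVK_sq'' y = (\<lambda>u. (r u * pStVK_tail'' y (r u) - pStVK_tail' y (r u)) / (4 * (r u * r u * r u)))"
    by auto
  have "0 < y^2" using y by simp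
  then have lip_r: "is_lipschitz_on S r"
    unfolding r_def by (intro is_lipschitz_on_sqrt[where c = "y^2"] is_lipschitz_on_max is_lipschitz_on_id) auto
  have "2 * y \<le> \<bar>2 * r u\<bar>" for u using ry[of u] y by simp
  then show "is_lipschitz_on S (pStVK_sq' y)"
    unfolding eq using y
    by (intro is_lipschitz_on_divide[OF S, where c = "2 * y"] is_lipschitz_on_cmult lip_r
        is_lipschitz_on_compose_bounded[OF S lip_r tail(1)]) auto
  have "y * y * y \<le> r u * r u * r u" for u using ry[of u] y by (intro mult_mono) auto
  then have "4 * (y * y * y) \<le> \<bar>4 * (r u * r u * r u)\<bar>" for u
    using abs_ge_self[of "4 * (r u * r u * r u)"] by (smt (verit))
  then show "is_lipschitz_on S (pStVK_sq'' y)"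
    unfolding eq using y
    by (intro is_lipschitz_on_divide[OF S, where c = "4 * (y * y * y)"] is_lipschitz_on_cmult
        is_lipschitz_on_mult[OF S] is_lipschitz_on_diff lip_r
        is_lipschitz_on_compose_bounded[OF S lip_r tail(1)]
        is_lipschitz_on_compose_bounded[OF S lip_r tail(2)]) auto
qed

section \<open>Matrix calculus\<close>

lemma inner_matrix_eq_sum: "(X::real^'n^'m) \<bullet> Y = (\<Sum>i\<in>UNIV. \<Sum>j\<in>UNIV. X$i$j * Y$i$j)"
  by (simp add: inner_vec_def)

lemma inner_matrix_mult_right:
  fixes X :: "real^'n^'m" and A :: "real^'k^'m" and B :: "real^'n^'k"
  shows "X \<bullet> (A ** B) = (transpose A ** X) \<bullet> B"
proof -
  have "X \<bullet> (A ** B) = (\<Sum>i\<in>UNIV. \<Sum>j\<in>UNIV. \<Sum>k\<in>UNIV. X$i$j * (A$i$k * B$k$j))"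
    by (simp add: inner_matrix_eq_sum matrix_matrix_mult_def sum_distrib_left)
  also have "\<dots> = (\<Sum>i\<in>UNIV. \<Sum>k\<in>UNIV. \<Sum>j\<in>UNIV. X$i$j * (A$i$k * B$k$j))"
    by (rule sum.cong[OF refl]) (rule sum.swap)
  also have "\<dots> = (\<Sum>k\<in>UNIV. \<Sum>i\<in>UNIV. \<Sum>j\<in>UNIV. X$i$j * (A$i$k * B$k$j))"
    by (rule sum.swap)
  also have "\<dots> = (\<Sum>k\<in>UNIV. \<Sum>j\<in>UNIV. \<Sum>i\<in>UNIV. X$i$j * (A$i$k * B$k$j))"
    by (rule sum.cong[OF refl]) (rule sum.swap)
  also have "\<dots> = (transpose A ** X) \<bullet> B"
    by (simp add: inner_matrix_eq_sum matrix_matrix_mult_def transpose_def sum_distrib_left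
        sum_distrib_right mult_ac)
  finally show ?thesis .
qed

lemma inner_transpose: "transpose (X::real^'n^'m) \<bullet> transpose Y = X \<bullet> Y"
  unfolding inner_matrix_eq_sum by (subst sum.swap) (simp add: transpose_def)

lemma trace_transpose_mult: "trace (transpose (A::real^'n^'m) ** B) = A \<bullet> B"
  unfolding inner_matrix_eq_sum
  by (subst sum.swap) (simp add: trace_def matrix_matrix_mult_def transpose_def)

lemma norm_transpose: "norm (transpose (X::real^'n^'m)) = norm X"
  by (simp add: norm_eq_sqrt_inner inner_transpose)

lemma norm_matrix_mult_le: "norm ((A::real^'k^'m) ** (B::real^'n^'k)) \<le> norm A * norm B"
proof -
  have sq_norm: "(norm X)^2 = (\<Sum>i\<in>UNIV. \<Sum>j\<in>UNIV. (X$i$j)^2)" for X :: "real^'q^'p"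
    unfolding power2_norm_eq_inner inner_matrix_eq_sum by (simp add: power2_eq_square)
  have row_col: "((A ** B)$i$j)^2 \<le> (\<Sum>k\<in>UNIV. (A$i$k)^2) * (\<Sum>k\<in>UNIV. (B$k$j)^2)" for i j
    using Cauchy_Schwarz_ineq[of "A$i" "column j B"]
    by (simp add: matrix_matrix_mult_def inner_vec_def column_def power2_eq_square)
  have "(norm (A ** B))^2 \<le> (\<Sum>i\<in>UNIV. \<Sum>j\<in>UNIV. (\<Sum>k\<in>UNIV. (A$i$k)^2) * (\<Sum>k\<in>UNIV. (B$k$j)^2))"
    unfolding sq_norm by (intro sum_mono row_col)
  also have "\<dots> = (\<Sum>i\<in>UNIV. \<Sum>k\<in>UNIV. (A$i$k)^2) * (\<Sum>j\<in>UNIV. \<Sum>k\<in>UNIV. (B$k$j)^2)"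
    by (rule sum_product[symmetric])
  also have "\<dots> = (norm A * norm B)^2"
    unfolding power_mult_distrib sq_norm by (subst (2) sum.swap) (rule refl)
  finally show ?thesis by (rule power2_le_imp_le) simp
qed

lemma bounded_bilinear_matrix_mult:
  "bounded_bilinear ((**) :: real^'k^'m \<Rightarrow> real^'n^'k \<Rightarrow> real^'n^'m)"
proof
  show "\<exists>K. \<forall>(A::real^'k^'m) (B::real^'n^'k). norm (A ** B) \<le> norm A * norm B * K"
    using norm_matrix_mult_le by (metis mult.right_neutral)
qed (vector matrix_matrix_mult_def sum.distrib sum_distrib_left algebra_simps)+

lemma transpose_add: "transpose ((A::'a::semiring_1^'n^'m) + B) = transpose A + transpose B"
  by (vector transpose_def)

lemma transpose_diff: "transpose ((A::'a::ring_1^'n^'m) - B) = transpose A - transpose B"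
  by (vector transpose_def)

lemma trace_scaleR: "trace ((c::real) *\<^sub>R (A::real^'n^'n)) = c * trace A"
  by (simp add: trace_def sum_distrib_left)

lemma bounded_linear_transpose: "bounded_linear (transpose :: real^'n^'m \<Rightarrow> real^'m^'n)"
  by (rule bounded_linear_intro[of _ 1]) (simp_all add: transpose_add transpose_scalar norm_transpose)

interpretation matrix_mult: bounded_bilinear "(**) :: real^'k^'m \<Rightarrow> real^'n^'k \<Rightarrow> real^'n^'m"
  by (rule bounded_bilinear_matrix_mult)

definition sqnorm_strain_grad :: "mat3 \<Rightarrow> mat3" where
  "sqnorm_strain_grad F = F ** (transpose F ** F - mat 1)"

definition sqnorm_strain_hess :: "mat3 \<Rightarrow> mat3 \<Rightarrow>\<^sub>L mat3" where
  "sqnorm_strain_hess F = Blinfun (\<lambda>K. K ** (transpose F ** F) - K + F ** (transpose K ** F) + F ** (transpose F ** K))"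

lemma transpose_strainE: "transpose (strainE F) = strainE F"
  by (simp add: strainE_def transpose_scalar transpose_diff matrix_transpose_mul)

lemma has_derivative_transpose_mult_self:
  "((\<lambda>F. transpose F ** F) has_derivative (\<lambda>K. transpose F ** K + transpose K ** F)) (at (F::real^'n^'m))"
  by (rule matrix_mult.FDERIV[OF bounded_linear.has_derivative[OF bounded_linear_transpose has_derivative_ident]
        has_derivative_ident])

lemma has_derivative_strainE:
  "(strainE has_derivative (\<lambda>K. (1/2) *\<^sub>R (transpose F ** K + transpose K ** F))) (at F)"
  unfolding strainE_def[abs_def]
  using has_derivative_scaleR_right[OF has_derivative_diff[OF has_derivative_transpose_mult_self
        has_derivative_const[of "mat 1"]], of "1/2"]
  by simp

lemma has_derivative_sqnorm_strain:
  "((\<lambda>F. (norm (strainE F))^2) has_derivative (\<lambda>K. sqnorm_strain_grad F \<bullet> K)) (at F)"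
proof -
  let ?E = "strainE F" and ?D = "\<lambda>K. (1/2) *\<^sub>R (transpose F ** K + transpose K ** F)"
  have "((\<lambda>F. strainE F \<bullet> strainE F) has_derivative (\<lambda>K. ?E \<bullet> ?D K + ?D K \<bullet> ?E)) (at F)"
    by (rule has_derivative_inner[OF has_derivative_strainE has_derivative_strainE])
  moreover have "?E \<bullet> ?D K + ?D K \<bullet> ?E = sqnorm_strain_grad F \<bullet> K" for K
  proof -
    have "?E \<bullet> (transpose K ** F) = transpose ?E \<bullet> transpose (transpose K ** F)"
      by (simp add: inner_transpose)
    then have "?E \<bullet> (transpose K ** F) = ?E \<bullet> (transpose F ** K)"
      by (simp add: transpose_strainE matrix_transpose_mul)
    then have "?E \<bullet> ?D K + ?D K \<bullet> ?E = 2 * (?E \<bullet> (transpose F ** K))"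
      by (simp add: inner_commute[of _ "?E"] inner_add_right)
    also have "\<dots> = (2 *\<^sub>R (F ** ?E)) \<bullet> K"
      by (simp add: inner_matrix_mult_right)
    also have "2 *\<^sub>R (F ** ?E) = sqnorm_strain_grad F"
      by (simp add: sqnorm_strain_grad_def strainE_def matrix_scalar_ac scalar_matrix_assoc[symmetric])
    finally show ?thesis .
  qed
  ultimately show ?thesis by (simp add: power2_norm_eq_inner)
qed

lemma trace_strainE: "trace (strainE F) = ((norm F)^2 - 3) / 2"
  by (simp add: strainE_def trace_scaleR trace_sub trace_I trace_transpose_mult power2_norm_eq_inner)

lemma has_derivative_trace_strainE:
  "((\<lambda>F. trace (strainE F)) has_derivative (\<lambda>K. F \<bullet> K)) (at F)"
proof -
  have "((\<lambda>F. (F \<bullet> F - 3) / 2) has_derivative (\<lambda>K. (F \<bullet> K + K \<bullet> F - 0) / 2)) (at F)"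
    by (intro derivative_eq_intros) auto
  then show ?thesis
    by (simp add: trace_strainE power2_norm_eq_inner inner_commute)
qed

lemma has_derivative_sqnorm_strain_grad:
  "(sqnorm_strain_grad has_derivative
     (\<lambda>K. K ** (transpose F ** F) - K + F ** (transpose K ** F) + F ** (transpose F ** K))) (at F)"
proof -
  have "(sqnorm_strain_grad has_derivative
      (\<lambda>K. F ** (transpose F ** K + transpose K ** F - 0) + K ** (transpose F ** F - mat 1))) (at F)"
    unfolding sqnorm_strain_grad_def[abs_def]
    by (intro matrix_mult.FDERIV has_derivative_ident has_derivative_diff
        has_derivative_transpose_mult_self has_derivative_const)
  then show ?thesis
    by (simp add: matrix_mult.add_right matrix_mult.diff_right algebra_simps)
qed

lemma sqnorm_strain_hess_apply:
  "blinfun_apply (sqnorm_strain_hess F) K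
     = K ** (transpose F ** F) - K + F ** (transpose K ** F) + F ** (transpose F ** K)"
  unfolding sqnorm_strain_hess_def
  by (subst bounded_linear_Blinfun_apply[OF has_derivative_bounded_linear[OF has_derivative_sqnorm_strain_grad]])
    (rule refl)

lemma has_derivative_sqnorm_strain_grad_hess:
  "(sqnorm_strain_grad has_derivative blinfun_apply (sqnorm_strain_hess F)) (at F)"
  using has_derivative_sqnorm_strain_grad by (simp add: sqnorm_strain_hess_apply[abs_def])

text \<open>A decomposition into bounded bilinear operations, for the Lipschitz calculus.\<close>

lemma sqnorm_strain_hess_eq:
  "sqnorm_strain_hess F = matrix_mult.prod_left (transpose F ** F) - id_blinfun
     + (matrix_mult.prod_right F o\<^sub>L matrix_mult.prod_left F o\<^sub>L Blinfun transpose)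
     + (matrix_mult.prod_right F o\<^sub>L matrix_mult.prod_right (transpose F))"
  by (rule blinfun_eqI)
    (simp add: sqnorm_strain_hess_apply bounded_linear_Blinfun_apply[OF bounded_linear_transpose]
      blinfun.add_left blinfun.diff_left)

lemma is_lipschitz_on_sqnorm_strain_hess:
  assumes U: "bounded U"
  shows "is_lipschitz_on U sqnorm_strain_hess"
proof -
  note mm = is_lipschitz_on_bilinear[OF bounded_bilinear_matrix_mult U]
  note comp = is_lipschitz_on_bilinear[OF bounded_bilinear_blinfun_compose U]
  have tr: "is_lipschitz_on U (\<lambda>F::mat3. transpose F)"
    by (rule is_lipschitz_on_linear[OF bounded_linear_transpose is_lipschitz_on_id])
  have left: "is_lipschitz_on U (\<lambda>F. matrix_mult.prod_left (f F))" if "is_lipschitz_on U f" for f :: "mat3 \<Rightarrow> mat3"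
    by (rule is_lipschitz_on_linear[OF matrix_mult.bounded_linear_prod_left that])
  have right: "is_lipschitz_on U (\<lambda>F. matrix_mult.prod_right (f F))" if "is_lipschitz_on U f" for f :: "mat3 \<Rightarrow> mat3"
    by (rule is_lipschitz_on_linear[OF matrix_mult.bounded_linear_prod_right that])
  show ?thesis
    unfolding sqnorm_strain_hess_eq[abs_def]
    by (intro is_lipschitz_on_add is_lipschitz_on_diff is_lipschitz_on_const comp left right mm tr
        is_lipschitz_on_id)
qed

lemma norm_sqnorm_strain_grad_le: "norm (sqnorm_strain_grad F) \<le> 2 * norm F * norm (strainE F)"
proof -
  have "sqnorm_strain_grad F = F ** (2 *\<^sub>R strainE F)"
    by (simp add: sqnorm_strain_grad_def strainE_def)
  then show ?thesis
    using norm_matrix_mult_le[of F "2 *\<^sub>R strainE F"] by (simp add: mult_ac)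
qed

lemma norm_sqnorm_strain_hess_apply_le:
  "norm (blinfun_apply (sqnorm_strain_hess F) K) \<le> (3 * (norm F)^2 + 1) * norm K"
proof -
  have triple: "norm (A ** (B ** C)) \<le> norm A * norm B * norm C" for A B C :: mat3
  proof -
    have "norm (A ** (B ** C)) \<le> norm A * norm (B ** C)" by (rule norm_matrix_mult_le)
    also have "\<dots> \<le> norm A * (norm B * norm C)" by (intro mult_left_mono norm_matrix_mult_le) simp
    finally show ?thesis by (simp add: mult.assoc)
  qed
  have "norm (blinfun_apply (sqnorm_strain_hess F) K) \<le> norm (K ** (transpose F ** F)) + norm K
      + norm (F ** (transpose K ** F)) + norm (F ** (transpose F ** K))"
    unfolding sqnorm_strain_hess_apply by (intro norm_triangle_le add_mono norm_triangle_ineq4 order_refl)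
  also have "\<dots> \<le> norm K * norm F * norm F + norm K + norm F * norm K * norm F + norm F * norm F * norm K"
    using triple[of K "transpose F" F] triple[of F "transpose K" F] triple[of F "transpose F" K]
    unfolding norm_transpose by linarith
  also have "\<dots> = (3 * (norm F)^2 + 1) * norm K"
    by (simp add: power2_eq_square algebra_simps)
  finally show ?thesis .
qed

lemma trace_strainE_le: "trace (strainE F) \<le> 2 * norm (strainE F)"
proof -
  have "(mat 1 :: mat3) \<bullet> mat 1 = 3"
    using trace_transpose_mult[of "mat 1 :: mat3" "mat 1"] by (simp add: trace_I)
  then have "norm (mat 1 :: mat3) \<le> 2"
    by (simp add: norm_eq_sqrt_inner real_le_lsqrt)
  have "trace (strainE F) = (mat 1 :: mat3) \<bullet> strainE F"
    using trace_transpose_mult[of "mat 1 :: mat3" "strainE F"] by simp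
  also have "\<dots> \<le> norm (mat 1 :: mat3) * norm (strainE F)" by (rule norm_cauchy_schwarz)
  also have "\<dots> \<le> 2 * norm (strainE F)"
    using \<open>norm (mat 1 :: mat3) \<le> 2\<close> by (simp add: mult_right_mono)
  finally show ?thesis .
qed

lemma is_lipschitz_on_strain_terms:
  assumes U: "bounded U"
  shows "is_lipschitz_on U (\<lambda>F. (norm (strainE F))^2)" "is_lipschitz_on U (\<lambda>F. trace (strainE F))"
    and "is_lipschitz_on U sqnorm_strain_grad"
proof -
  note mm = is_lipschitz_on_bilinear[OF bounded_bilinear_matrix_mult U]
  note inner = is_lipschitz_on_bilinear[OF bounded_bilinear_inner U]
  have gram: "is_lipschitz_on U (\<lambda>F::mat3. transpose F ** F - mat 1)"
    by (intro is_lipschitz_on_diff is_lipschitz_on_const mm is_lipschitz_on_id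
        is_lipschitz_on_linear[OF bounded_linear_transpose])
  have "is_lipschitz_on U (\<lambda>F. (1/2) *\<^sub>R (transpose F ** F - mat 1))"
    by (rule is_lipschitz_on_linear[OF bounded_linear_scaleR_right gram])
  then have E: "is_lipschitz_on U strainE" unfolding strainE_def[abs_def] .
  show "is_lipschitz_on U (\<lambda>F. (norm (strainE F))^2)"
    unfolding power2_norm_eq_inner by (rule inner[OF E E])
  show "is_lipschitz_on U (\<lambda>F. trace (strainE F))"
    unfolding trace_strainE power2_norm_eq_inner diff_divide_distrib
    by (intro is_lipschitz_on_diff is_lipschitz_on_const inner is_lipschitz_on_id
        is_lipschitz_on_linear[OF bounded_linear_divide])
  show "is_lipschitz_on U sqnorm_strain_grad"
    unfolding sqnorm_strain_grad_def[abs_def] by (rule mm[OF is_lipschitz_on_id gram])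
qed

lemma norm_sq_eq_trace_strainE: "(norm F)^2 = 2 * trace (strainE F) + 3"
  by (simp add: trace_strainE field_simps)

lemma sqnorm_strain_weight_le:
  fixes F :: mat3
  assumes y: "y > 0"
  defines "u \<equiv> (norm (strainE F))^2"
  shows "\<bar>pStVK_sq'' y u\<bar> * (norm (sqnorm_strain_grad F))^2 + \<bar>pStVK_sq' y u\<bar> * (3 * (norm F)^2 + 1)
    \<le> 42 * y + 33"
proof -
  define e where "e = norm (strainE F)"
  define w where "w = (norm F)^2"
  have e: "sqrt u = e" by (simp add: e_def u_def)
  have w_le: "w \<le> 4 * e + 3"
    using trace_strainE_le[of F] norm_sq_eq_trace_strainE[of F] unfolding w_def e_def by linarith
  have G: "(norm (sqnorm_strain_grad F))^2 \<le> 4 * u * w"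
    using power_mono[OF norm_sqnorm_strain_grad_le[of F], of 2]
    by (simp add: u_def w_def power_mult_distrib mult_ac)
  note b = pStVK_sq_deriv_bounds[OF y, of u, unfolded e]
  have u0: "0 \<le> u" by (simp add: u_def)
  have "\<bar>pStVK_sq'' y u\<bar> * (norm (sqnorm_strain_grad F))^2 \<le> \<bar>pStVK_sq'' y u\<bar> * (4 * u * (4 * e + 3))"
    using G w_le by (intro mult_left_mono order_trans[OF G]) (auto intro!: mult_left_mono simp: u0)
  also have "\<dots> = 16 * (u * e * \<bar>pStVK_sq'' y u\<bar>) + 12 * (u * \<bar>pStVK_sq'' y u\<bar>)"
    by (simp add: algebra_simps)
  also have "\<dots> \<le> 24 * y + 18" using b(3,4) u0 by simp
  finally have t1: "\<bar>pStVK_sq'' y u\<bar> * (norm (sqnorm_strain_grad F))^2 \<le> 24 * y + 18" .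
  have "\<bar>pStVK_sq' y u\<bar> * (3 * (norm F)^2 + 1) \<le> \<bar>pStVK_sq' y u\<bar> * (12 * e + 10)"
    using w_le by (intro mult_left_mono) (simp_all add: w_def)
  also have "\<dots> = 12 * (e * \<bar>pStVK_sq' y u\<bar>) + 10 * \<bar>pStVK_sq' y u\<bar>"
    by (simp add: algebra_simps)
  also have "\<dots> \<le> 18 * y + 15" using b(1,2) u0 by simp
  finally show ?thesis using t1 by simp
qed

lemma trace_strain_weight_le:
  fixes F :: mat3
  assumes z: "z > 0"
  defines "t \<equiv> trace (strainE F)"
  shows "\<bar>pStVK'' t z\<bar> * (norm F)^2 + \<bar>pStVK' t z\<bar> \<le> 9 * z + 6"
proof -
  have "\<bar>pStVK'' t z\<bar> * (norm F)^2 = \<bar>pStVK'' t z\<bar> * (2 * t + 3)"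
    by (simp add: t_def norm_sq_eq_trace_strainE)
  also have "\<dots> \<le> 2 * \<bar>t * pStVK'' t z\<bar> + 3 * \<bar>pStVK'' t z\<bar>"
    by (simp add: abs_mult algebra_simps mult_right_mono)
  finally show ?thesis using pStVK_deriv_bounds[OF z, of t] by linarith
qed

section \<open>The relaxed energy\<close>

definition rank_one_blinfun :: "'a::real_inner \<Rightarrow> 'a \<Rightarrow> 'a \<Rightarrow>\<^sub>L 'a" where
  "rank_one_blinfun a b = blinfun_scaleR_left b o\<^sub>L blinfun_inner_left a"

lemma rank_one_blinfun_apply [simp]: "blinfun_apply (rank_one_blinfun a b) x = (x \<bullet> a) *\<^sub>R b"
  by (simp add: rank_one_blinfun_def)

definition relaxed_energy :: "real \<Rightarrow> real \<Rightarrow> real \<Rightarrow> real \<Rightarrow> mat3 \<Rightarrow> real" where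
  "relaxed_energy mu lam y z F = mu * pStVK (norm (strainE F)) y + lam / 2 * pStVK (trace (strainE F)) z"

definition relaxed_grad :: "real \<Rightarrow> real \<Rightarrow> real \<Rightarrow> real \<Rightarrow> mat3 \<Rightarrow> mat3" where
  "relaxed_grad mu lam y z F =
     mu *\<^sub>R (pStVK_sq' y ((norm (strainE F))^2) *\<^sub>R sqnorm_strain_grad F)
     + (lam / 2) *\<^sub>R (pStVK' (trace (strainE F)) z *\<^sub>R F)"

definition relaxed_hess :: "real \<Rightarrow> real \<Rightarrow> real \<Rightarrow> real \<Rightarrow> mat3 \<Rightarrow> mat3 \<Rightarrow>\<^sub>L mat3" where
  "relaxed_hess mu lam y z F =
     mu *\<^sub>R (pStVK_sq'' y ((norm (strainE F))^2) *\<^sub>R rank_one_blinfun (sqnorm_strain_grad F) (sqnorm_strain_grad F)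
            + pStVK_sq' y ((norm (strainE F))^2) *\<^sub>R sqnorm_strain_hess F)
     + (lam / 2) *\<^sub>R (pStVK'' (trace (strainE F)) z *\<^sub>R rank_one_blinfun F F
            + pStVK' (trace (strainE F)) z *\<^sub>R id_blinfun)"

lemma pbar_eq_relaxed_energy:
  "pbar mu lam L2 = relaxed_energy mu lam (sqrt (L2 / mu)) (sqrt (2 * L2 / lam))"
  by (simp add: fun_eq_iff pbar_def relaxed_energy_def)

lemma has_derivative_relaxed_energy:
  assumes y: "y > 0" and z: "z > 0"
  shows "(relaxed_energy mu lam y z has_derivative (\<lambda>K. relaxed_grad mu lam y z F \<bullet> K)) (at F)"
proof -
  have energy: "relaxed_energy mu lam y z
      = (\<lambda>F. mu * pStVK_sq y ((norm (strainE F))^2) + lam / 2 * pStVK (trace (strainE F)) z)"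
    using pStVK_eq_pStVK_sq[OF y] by (simp add: fun_eq_iff relaxed_energy_def)
  have "(relaxed_energy mu lam y z has_derivative
      (\<lambda>K. mu * ((sqnorm_strain_grad F \<bullet> K) * pStVK_sq' y ((norm (strainE F))^2))
         + lam / 2 * ((F \<bullet> K) * pStVK' (trace (strainE F)) z))) (at F)"
    unfolding energy
    by (intro has_derivative_add has_derivative_mult_right
        DERIV_compose_FDERIV[OF has_real_derivative_pStVK_sq[OF y] has_derivative_sqnorm_strain]
        DERIV_compose_FDERIV[OF has_real_derivative_pStVK[OF z] has_derivative_trace_strainE])
  then show ?thesis
    by (simp add: relaxed_grad_def inner_add_left algebra_simps)
qed

lemma has_derivative_relaxed_grad:
  assumes y: "y > 0" and z: "z > 0"
  shows "(relaxed_grad mu lam y z has_derivative blinfun_apply (relaxed_hess mu lam y z F)) (at F)"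
proof -
  have "(relaxed_grad mu lam y z has_derivative
      (\<lambda>K. mu *\<^sub>R (pStVK_sq' y ((norm (strainE F))^2) *\<^sub>R blinfun_apply (sqnorm_strain_hess F) K
                  + ((sqnorm_strain_grad F \<bullet> K) * pStVK_sq'' y ((norm (strainE F))^2)) *\<^sub>R sqnorm_strain_grad F)
         + (lam / 2) *\<^sub>R (pStVK' (trace (strainE F)) z *\<^sub>R K
                  + ((F \<bullet> K) * pStVK'' (trace (strainE F)) z) *\<^sub>R F))) (at F)"
    unfolding relaxed_grad_def[abs_def]
    by (intro has_derivative_add has_derivative_scaleR_right has_derivative_scaleR has_derivative_ident
        has_derivative_sqnorm_strain_grad_hess
        DERIV_compose_FDERIV[OF has_real_derivative_pStVK_sq'[OF y] has_derivative_sqnorm_strain]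
        DERIV_compose_FDERIV[OF has_real_derivative_pStVK'[OF z] has_derivative_trace_strainE])
  moreover have "blinfun_apply (relaxed_hess mu lam y z F) = (\<lambda>K.
      mu *\<^sub>R (pStVK_sq' y ((norm (strainE F))^2) *\<^sub>R blinfun_apply (sqnorm_strain_hess F) K
                  + ((sqnorm_strain_grad F \<bullet> K) * pStVK_sq'' y ((norm (strainE F))^2)) *\<^sub>R sqnorm_strain_grad F)
         + (lam / 2) *\<^sub>R (pStVK' (trace (strainE F)) z *\<^sub>R K
                  + ((F \<bullet> K) * pStVK'' (trace (strainE F)) z) *\<^sub>R F))"
    by (simp add: fun_eq_iff relaxed_hess_def blinfun.bilinear_simps inner_commute algebra_simps)
  ultimately show ?thesis by simp
qed

lemma norm_relaxed_hess_le:
  assumes mu: "0 \<le> mu" and lam: "0 \<le> lam" and y: "y > 0" and z: "z > 0"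
  shows "norm (relaxed_hess mu lam y z F) \<le> mu * (42 * y + 33) + lam / 2 * (9 * z + 6)"
proof (rule norm_blinfun_bound)
  show "0 \<le> mu * (42 * y + 33) + lam / 2 * (9 * z + 6)" using mu lam y z by simp
  fix K
  define u where "u = (norm (strainE F))^2"
  define t where "t = trace (strainE F)"
  define G where "G = sqnorm_strain_grad F"
  define A where "A = pStVK_sq'' y u *\<^sub>R ((K \<bullet> G) *\<^sub>R G) + pStVK_sq' y u *\<^sub>R blinfun_apply (sqnorm_strain_hess F) K"
  define B where "B = pStVK'' t z *\<^sub>R ((K \<bullet> F) *\<^sub>R F) + pStVK' t z *\<^sub>R K"
  have outer: "norm (c *\<^sub>R ((K \<bullet> a) *\<^sub>R a)) \<le> \<bar>c\<bar> * ((norm a)^2 * norm K)" for c and a :: mat3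
  proof -
    have "\<bar>K \<bullet> a\<bar> * norm a \<le> (norm a)^2 * norm K"
      using mult_left_mono[OF Cauchy_Schwarz_ineq2[of K a] norm_ge_zero[of a]]
      by (simp add: power2_eq_square mult_ac)
    then show ?thesis by (simp add: abs_mult mult.assoc mult_left_mono)
  qed
  have "norm A \<le> \<bar>pStVK_sq'' y u\<bar> * ((norm G)^2 * norm K) + \<bar>pStVK_sq' y u\<bar> * ((3 * (norm F)^2 + 1) * norm K)"
    unfolding A_def using outer[of "pStVK_sq'' y u" G] norm_sqnorm_strain_hess_apply_le[of F K]
    by (intro norm_triangle_le add_mono) (simp_all add: mult_left_mono)
  also have "\<dots> \<le> (42 * y + 33) * norm K"
    using mult_right_mono[OF sqnorm_strain_weight_le[OF y, of F] norm_ge_zero[of K]]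
    by (simp add: u_def G_def algebra_simps)
  finally have nA: "norm A \<le> (42 * y + 33) * norm K" .
  have "norm B \<le> \<bar>pStVK'' t z\<bar> * ((norm F)^2 * norm K) + \<bar>pStVK' t z\<bar> * norm K"
    unfolding B_def using outer[of "pStVK'' t z" F]
    by (intro norm_triangle_le add_mono) (simp_all add: mult_left_mono)
  also have "\<dots> \<le> (9 * z + 6) * norm K"
    using mult_right_mono[OF trace_strain_weight_le[OF z, of F] norm_ge_zero[of K]]
    by (simp add: t_def algebra_simps)
  finally have nB: "norm B \<le> (9 * z + 6) * norm K" .
  have "blinfun_apply (relaxed_hess mu lam y z F) K = mu *\<^sub>R A + (lam / 2) *\<^sub>R B"
    by (simp add: relaxed_hess_def A_def B_def u_def t_def G_def blinfun.bilinear_simps)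
  also have "norm \<dots> \<le> mu * norm A + lam / 2 * norm B"
    using mu lam by (intro order_trans[OF norm_triangle_ineq]) simp
  also have "\<dots> \<le> (mu * (42 * y + 33) + lam / 2 * (9 * z + 6)) * norm K"
    using mult_left_mono[OF nA mu] mult_left_mono[OF nB, of "lam / 2"] lam
    by (simp add: algebra_simps)
  finally show "norm (blinfun_apply (relaxed_hess mu lam y z F) K)
      \<le> (mu * (42 * y + 33) + lam / 2 * (9 * z + 6)) * norm K" .
qed

lemma lipschitz_relaxed_grad:
  assumes mu: "0 \<le> mu" and lam: "0 \<le> lam" and y: "y > 0" and z: "z > 0"
  shows "(mu * (42 * y + 33) + lam / 2 * (9 * z + 6))-lipschitz_on UNIV (relaxed_grad mu lam y z)"
proof (rule bounded_derivative_imp_lipschitz)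
  show "(relaxed_grad mu lam y z has_derivative blinfun_apply (relaxed_hess mu lam y z F)) (at F within UNIV)"
    for F using has_derivative_relaxed_grad[OF y z] by simp
  show "onorm (blinfun_apply (relaxed_hess mu lam y z F)) \<le> mu * (42 * y + 33) + lam / 2 * (9 * z + 6)"
    for F using norm_relaxed_hess_le[OF assms] by (simp add: norm_blinfun.rep_eq)
qed (use mu lam y z in simp_all)

lemma is_lipschitz_on_relaxed_hess:
  assumes y: "y > 0" and z: "z > 0" and U: "bounded U"
  shows "is_lipschitz_on U (relaxed_hess mu lam y z)"
proof -
  note strain = is_lipschitz_on_strain_terms[OF U]
  note scaleR = is_lipschitz_on_scaleR[OF U]
  have rank_one: "is_lipschitz_on U (\<lambda>F. rank_one_blinfun (f F) (g F))"
    if "is_lipschitz_on U f" "is_lipschitz_on U g" for f g :: "mat3 \<Rightarrow> mat3"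
    unfolding rank_one_blinfun_def using that
    by (intro is_lipschitz_on_bilinear[OF bounded_bilinear_blinfun_compose U]
        is_lipschitz_on_linear[OF bounded_linear_blinfun_scaleR_left]
        is_lipschitz_on_linear[OF bounded_linear_blinfun_inner_left])
  have "is_lipschitz_on U (\<lambda>F. pStVK_sq'' y ((norm (strainE F))^2))"
    "is_lipschitz_on U (\<lambda>F. pStVK_sq' y ((norm (strainE F))^2))"
    using is_lipschitz_on_compose_bounded[OF U strain(1)] is_lipschitz_on_pStVK_sq_derivs[OF y] by blast+
  moreover have "is_lipschitz_on U (\<lambda>F. pStVK'' (trace (strainE F)) z)"
    "is_lipschitz_on U (\<lambda>F. pStVK' (trace (strainE F)) z)"
    using is_lipschitz_on_compose_bounded[OF U strain(2)] is_lipschitz_on_pStVK_derivs[OF z] by blast+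
  ultimately show ?thesis
    unfolding relaxed_hess_def[abs_def]
    by (intro is_lipschitz_on_add is_lipschitz_on_linear[OF bounded_linear_scaleR_right] scaleR
        rank_one strain(3) is_lipschitz_on_id is_lipschitz_on_sqnorm_strain_hess[OF U] is_lipschitz_on_const)
qed

lemma pStVK_nonneg: "y > 0 \<Longrightarrow> 0 \<le> pStVK x y"
  by (simp add: pStVK_def)

lemma pStVK_le_sq_imp_eq:
  assumes y: "y > 0" and le: "pStVK x y \<le> y^2"
  shows "pStVK x y = x^2"
proof -
  have tail: "y^2 < pStVK_tail y s" if "y < s" for s
  proof -
    have "(y / 3)^2 < (2 * y / 3 - s)^2"
      using y that by (intro power2_strict_mono) auto
    then have "y^2 < pStVK_radicand y s" by (simp add: pStVK_radicand_def power_divide)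
    then have "y < sqrt (pStVK_radicand y s)" using y by (simp add: real_less_rsqrt)
    then show ?thesis using y by (simp add: pStVK_tail_def power2_eq_square)
  qed
  have "\<not> y < x" "\<not> x < - y"
    using le tail[of x] tail[of "- x"] y by (auto simp: pStVK_eq_tail split: if_split_asm)
  then show ?thesis by (simp add: pStVK_eq_tail)
qed

lemma pbar_eq_stvk_energy:
  assumes mu: "mu > 0" and lam: "lam > 0" and L2: "L2 > 0" and le: "pbar mu lam L2 F \<le> L2"
  shows "pbar mu lam L2 F = stvk_energy mu lam F"
proof -
  define y where "y = sqrt (L2 / mu)"
  define z where "z = sqrt (2 * L2 / lam)"
  have y: "y > 0" "mu * y^2 = L2" and z: "z > 0" "lam / 2 * z^2 = L2"
    using mu lam L2 by (simp_all add: y_def z_def)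
  define a where "a = pStVK (norm (strainE F)) y"
  define b where "b = pStVK (trace (strainE F)) z"
  have "mu * a + lam / 2 * b \<le> L2" "0 \<le> a" "0 \<le> b"
    using le pStVK_nonneg[OF y(1)] pStVK_nonneg[OF z(1)] by (simp_all add: pbar_def a_def b_def y_def z_def)
  moreover have "0 \<le> mu * a" "0 \<le> lam / 2 * b" using \<open>0 \<le> a\<close> \<open>0 \<le> b\<close> mu lam by simp_all
  ultimately have "mu * a \<le> mu * y^2" "lam / 2 * b \<le> lam / 2 * z^2"
    using y(2) z(2) by linarith+
  then have "a \<le> y^2" "b \<le> z^2" using mu lam by simp_all
  then have "a = (norm (strainE F))^2" "b = (trace (strainE F))^2"
    unfolding a_def b_def using pStVK_le_sq_imp_eq y(1) z(1) by blast+
  then show ?thesis by (simp add: pbar_def stvk_energy_def a_def b_def y_def z_def)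
qed

lemma has_gradient_everywhere_pbar:
  assumes "mu > 0" "lam > 0" "L2 > 0"
  shows "has_gradient_everywhere (pbar mu lam L2) (relaxed_grad mu lam (sqrt (L2 / mu)) (sqrt (2 * L2 / lam)))"
  unfolding has_gradient_everywhere_def pbar_eq_relaxed_energy
  using assms by (intro allI has_derivative_relaxed_energy) simp_all

text \<open>By AM-GM, \<open>mu * sqrt (L2 / mu) = sqrt (L2 * mu) \<le> (L2 + mu) / 2\<close>, so the Hessian bound is
  dominated by a linear polynomial in \<open>L2\<close>.\<close>

lemma curvature_bounded_pbar:
  assumes mu: "mu > 0" and lam: "lam > 0" and L2: "L2 > 0"
  shows "curvature_bounded (54 * mu + 21 / 4 * lam + 51 / 2 * L2) (pbar mu lam L2)"
proof -
  define y where "y = sqrt (L2 / mu)"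
  define z where "z = sqrt (2 * L2 / lam)"
  have scale: "c * sqrt (a / c) = sqrt (a * c)" if "c > 0" for a c :: real
  proof -
    have "a * c = a / c * c^2" using that by (simp add: power2_eq_square)
    then have "sqrt (a * c) = sqrt (a / c) * sqrt (c^2)" by (simp only: real_sqrt_mult)
    then show ?thesis using that by simp
  qed
  have "mu * y = sqrt (L2 * mu)" "lam * z = sqrt (2 * L2 * lam)"
    using scale[OF mu] scale[OF lam] by (simp_all add: y_def z_def)
  then have "mu * y \<le> (L2 + mu) / 2" "lam * z \<le> (2 * L2 + lam) / 2"
    using arith_geo_mean_sqrt[of L2 mu] arith_geo_mean_sqrt[of "2 * L2" lam] mu lam L2 by simp_all
  then have "mu * (42 * y + 33) + lam / 2 * (9 * z + 6) \<le> 54 * mu + 21 / 4 * lam + 51 / 2 * L2"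
    by (simp add: algebra_simps)
  moreover have "y > 0" "z > 0" using mu lam L2 by (simp_all add: y_def z_def)
  ultimately have "(54 * mu + 21 / 4 * lam + 51 / 2 * L2)-lipschitz_on UNIV (relaxed_grad mu lam y z)"
    using lipschitz_relaxed_grad[of mu lam y z] mu lam lipschitz_on_mono by fastforce
  moreover have "has_gradient_everywhere (pbar mu lam L2) (relaxed_grad mu lam y z)"
    unfolding y_def z_def by (rule has_gradient_everywhere_pbar[OF mu lam L2])
  ultimately show ?thesis
    unfolding curvature_bounded_def has_gradient_everywhere_def
    by (blast intro: lipschitz_gradient_imp_convex_on)
qed

lemma twice_diff_loclip_hessian_pbar:
  assumes mu: "mu > 0" and lam: "lam > 0" and L2: "L2 > 0"
  shows "twice_diff_loclip_hessian (pbar mu lam L2)"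
proof -
  define y where "y = sqrt (L2 / mu)"
  define z where "z = sqrt (2 * L2 / lam)"
  have y: "y > 0" and z: "z > 0" using mu lam L2 by (simp_all add: y_def z_def)
  have "\<exists>U C. open U \<and> F \<in> U \<and> C-lipschitz_on U (relaxed_hess mu lam y z)" for F
    using is_lipschitz_on_relaxed_hess[OF y z bounded_ball[of F 1]]
    unfolding is_lipschitz_on_def by (meson centre_in_ball open_ball zero_less_one)
  then show ?thesis
    unfolding twice_diff_loclip_hessian_def
    using has_gradient_everywhere_pbar[OF mu lam L2, folded y_def z_def] has_derivative_relaxed_grad[OF y z]
    by blast
qed

lemma twice_diff_loclip_hessian_imp_twice_differentiable:
  "twice_diff_loclip_hessian f \<Longrightarrow> twice_differentiable f"
  unfolding twice_diff_loclip_hessian_def twice_differentiable_def by blast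

theorem corollary6:
  fixes mu lam :: real
  assumes "mu > 0" and "lam > 0"
  shows "(\<exists>q :: real poly. \<forall>L2 > 0. curvature_bounded (poly q L2) (pbar mu lam L2))
       \<and> (\<forall>L2 > 0. twice_differentiable (pbar mu lam L2))
       \<and> (\<forall>L2 > 0. twice_diff_loclip_hessian (pbar mu lam L2))
       \<and> (\<forall>F. stvk_energy mu lam F \<ge> 0)
       \<and> (\<forall>L2 > 0. \<forall>F. pbar mu lam L2 F \<le> L2 \<longrightarrow> pbar mu lam L2 F = stvk_energy mu lam F)"
proof (intro conjI allI impI)
  have "poly [:54 * mu + 21 / 4 * lam, 51 / 2:] L2 = 54 * mu + 21 / 4 * lam + 51 / 2 * L2" for L2
    by (simp add: algebra_simps)
  then show "\<exists>q :: real poly. \<forall>L2 > 0. curvature_bounded (poly q L2) (pbar mu lam L2)"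
    using curvature_bounded_pbar[OF assms] by metis
  show "twice_diff_loclip_hessian (pbar mu lam L2)" if "L2 > 0" for L2
    by (rule twice_diff_loclip_hessian_pbar[OF assms that])
  show "twice_differentiable (pbar mu lam L2)" if "L2 > 0" for L2
    using twice_diff_loclip_hessian_pbar[OF assms that]
    by (rule twice_diff_loclip_hessian_imp_twice_differentiable)
  show "stvk_energy mu lam F \<ge> 0" for F
    using assms by (simp add: stvk_energy_def)
  show "pbar mu lam L2 F = stvk_energy mu lam F" if "L2 > 0" "pbar mu lam L2 F \<le> L2" for L2 F
    by (rule pbar_eq_stvk_energy[OF assms that])
qed

end
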